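(* Let $\tau_i$ be an HC task that switches to HC mode at time $t_i\le t$, and suppose $D_i-D_i^L\le t-t_i<D_i$. Then $\tau_i$ generates maximal demand during $[0,t)$ with a release sequence in which successive jobs are released as soon as possible (every $T_i$ time units) and the first job is released either at time $0$ or at time $t-D_i-\lfloor (t-D_i)/T_i\rfloor\cdot T_i$.
   Context: A mixed-criticality sporadic task is $\tau_i=(T_i,L_i,\{C_i^L,C_i^H\},D_i)$: jobs are released with minimum separation $T_i$, $L_i\in\{LC,HC\}$, $D_i\le T_i$ is the relative deadline, and $C_i^L<C_i^H$ for HC tasks. Each task has a tightened deadline $D_i^L\le D_i$. An HC task is in LC mode until the instant $t_i$ at which some job requests to execute for more than $C_i^L$; from then on it is in HC mode. While in LC mode, a job released at $r$ must receive $C_i^L$ time units by $r+D_i^L$; once the task is in HC mode, a job may require up to $C_i^H$ units in total, to be received by its actual deadline $r+D_i$. The demand of a task during $[0,t)$ is the amount of execution that must be completed within $[0,t)$ in order to meet all of its deadlines that fall in $[0,t)$; execution with deadline after $t$ contributes no demand. "Maximal demand" is over all legal release sequences (minimum separation $T_i$) and all legal execution behaviours. *)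

theory Defs
  imports Complex_Main
begin

definition legal_release :: "real \<Rightarrow> real set \<Rightarrow> bool" where
  "legal_release T R \<longleftrightarrow>
     (\<forall>r\<in>R. 0 \<le> r) \<and> (\<forall>r\<in>R. \<forall>r'\<in>R. r \<noteq> r' \<longrightarrow> T \<le> \<bar>r - r'\<bar>)"

(* A job released at r is served in LC mode (tightened deadline r + DL,
   budget CL) iff its tightened deadline is not after the switch instant ti;
   otherwise the task is in HC mode during the job's lifetime (deadline r + D,
   budget CH). *)
definition lc_job :: "real \<Rightarrow> real \<Rightarrow> real \<Rightarrow> bool" where
  "lc_job DL ti r \<longleftrightarrow> r + DL \<le> ti"

definition job_deadline :: "real \<Rightarrow> real \<Rightarrow> real \<Rightarrow> real \<Rightarrow> real" where
  "job_deadline D DL ti r = (if lc_job DL ti r then r + DL else r + D)"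

(* Execution behaviour: c r is the total execution requested by the job
   released at r. *)
definition legal_behaviour ::
  "real \<Rightarrow> real \<Rightarrow> real \<Rightarrow> real \<Rightarrow> real set \<Rightarrow> (real \<Rightarrow> real) \<Rightarrow> bool" where
  "legal_behaviour CL CH DL ti R c \<longleftrightarrow>
     (\<forall>r\<in>R. 0 \<le> c r \<and> c r \<le> CH \<and> (lc_job DL ti r \<longrightarrow> c r \<le> CL))"

definition demand ::
  "real \<Rightarrow> real \<Rightarrow> real \<Rightarrow> real \<Rightarrow> real set \<Rightarrow> (real \<Rightarrow> real) \<Rightarrow> real" where
  "demand D DL ti t R c = (\<Sum>r\<in>{r\<in>R. job_deadline D DL ti r \<le> t}. c r)"

definition periodic_from :: "real \<Rightarrow> real \<Rightarrow> real set" where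
  "periodic_from T s = {s + real k * T | k. True}"

end

theory Submission
  imports Defs
begin

(* A job contributes to the demand in [0,t) either as an LC job released by a = ti - DL
   (budget CL) or as an HC job released in the window (a, t - D] (budget CH); since that
   window is shorter than T, it holds at most one release. Without an HC job at most
   floor(a/T) + 1 LC jobs fit, as in the periodic sequence starting at 0. With an HC job
   at r, every LC release precedes r - T <= t - D - T, so there are at most floor((t-D)/T)
   of them, as in the periodic sequence through t - D. Requesting full budgets, the better
   of these two sequences therefore dominates every legal scenario. *)

lemma legal_release_eq_if_dist_less:
  assumes "legal_release T R" "r \<in> R" "r' \<in> R" "\<bar>r - r'\<bar> < T"
  shows "r = r'"
  using assms unfolding legal_release_def by force

lemma legal_release_periodic_from:
  assumes "0 < T" "0 \<le> s"
  shows "legal_release T (periodic_from T s)"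
  unfolding legal_release_def periodic_from_def
proof safe
  fix k :: nat show "0 \<le> s + real k * T" using assms by simp
next
  fix k k' :: nat assume "s + real k * T \<noteq> s + real k' * T"
  hence "1 \<le> \<bar>real k - real k'\<bar>" by auto
  hence "1 * T \<le> \<bar>real k - real k'\<bar> * T" using assms by (intro mult_right_mono) auto
  thus "T \<le> \<bar>s + real k * T - (s + real k' * T)\<bar>"
    using assms by (simp add: left_diff_distrib[symmetric] abs_mult)
qed

lemma
  assumes "0 < T" "legal_release T R"
  shows finite_releases_le: "finite {r\<in>R. r \<le> x}"
    and card_releases_le: "card {r\<in>R. r \<le> x} \<le> nat (\<lfloor>x / T\<rfloor> + 1)"
proof -
  let ?A = "{r\<in>R. r \<le> x}"
  let ?slot = "\<lambda>r. \<lfloor>r / T\<rfloor>"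
  have inj: "inj_on ?slot ?A"
  proof (rule inj_onI)
    fix r r' assume "r \<in> ?A" "r' \<in> ?A" "?slot r = ?slot r'"
    moreover from \<open>?slot r = ?slot r'\<close> have "\<bar>r / T - r' / T\<bar> < 1" by linarith
    then have "\<bar>r - r'\<bar> < T"
      using assms(1) by (simp add: diff_divide_distrib[symmetric] abs_divide divide_less_eq)
    ultimately show "r = r'" using legal_release_eq_if_dist_less[OF assms(2)] by blast
  qed
  have slots: "?slot ` ?A \<subseteq> {0..\<lfloor>x / T\<rfloor>}"
    using assms by (auto simp: legal_release_def intro!: floor_mono divide_right_mono)
  show "finite ?A"
    using finite_imageD[OF finite_subset[OF slots] inj] by simp
  have "card ?A \<le> card {0..\<lfloor>x / T\<rfloor>}"
    using card_inj_on_le[OF inj slots] by simp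
  then show "card ?A \<le> nat (\<lfloor>x / T\<rfloor> + 1)" by simp
qed

lemma
  assumes "0 < T"
  shows finite_periodic_from_le: "finite {r\<in>periodic_from T s. r \<le> x}"
    and card_periodic_from_le: "card {r\<in>periodic_from T s. r \<le> x} = nat (\<lfloor>(x - s) / T\<rfloor> + 1)"
proof -
  let ?n = "nat (\<lfloor>(x - s) / T\<rfloor> + 1)"
  have "s + real k * T \<le> x \<longleftrightarrow> k < ?n" for k
  proof -
    have "s + real k * T \<le> x \<longleftrightarrow> real k \<le> (x - s) / T"
      using assms by (simp add: pos_le_divide_eq algebra_simps)
    also have "\<dots> \<longleftrightarrow> k < ?n" by linarith
    finally show ?thesis .
  qed
  then have eq: "{r\<in>periodic_from T s. r \<le> x} = (\<lambda>k. s + real k * T) ` {..<?n}"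
    unfolding periodic_from_def by auto
  have "inj_on (\<lambda>k. s + real k * T) {..<?n}"
    using assms by (auto simp: inj_on_def)
  then show "finite {r\<in>periodic_from T s. r \<le> x}" "card {r\<in>periodic_from T s. r \<le> x} = ?n"
    unfolding eq by (simp_all add: card_image)
qed

definition max_behaviour :: "real \<Rightarrow> real \<Rightarrow> real \<Rightarrow> real \<Rightarrow> real \<Rightarrow> real" where
  "max_behaviour CL CH DL ti r = (if lc_job DL ti r then CL else CH)"

lemma legal_behaviour_max_behaviour:
  assumes "0 \<le> CL" "CL \<le> CH"
  shows "legal_behaviour CL CH DL ti R (max_behaviour CL CH DL ti)"
  using assms unfolding legal_behaviour_def max_behaviour_def by auto

lemma demand_le_demand_max_behaviour:
  assumes "legal_behaviour CL CH DL ti R c"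
  shows "demand D DL ti t R c \<le> demand D DL ti t R (max_behaviour CL CH DL ti)"
  using assms unfolding demand_def legal_behaviour_def max_behaviour_def
  by (intro sum_mono) auto

lemma jobs_due_eq:
  assumes "ti \<le> t"
  shows "{r\<in>R. job_deadline D DL ti r \<le> t} =
           {r\<in>R. r \<le> ti - DL} \<union> {r\<in>R. ti - DL < r \<and> r \<le> t - D}"
  using assms unfolding job_deadline_def lc_job_def by auto

lemma demand_max_behaviour:
  assumes "0 < T" "legal_release T R" "ti \<le> t"
  shows "demand D DL ti t R (max_behaviour CL CH DL ti) =
           CL * card {r\<in>R. r \<le> ti - DL} + CH * card {r\<in>R. ti - DL < r \<and> r \<le> t - D}"
proof -
  let ?L = "{r\<in>R. r \<le> ti - DL}" and ?H = "{r\<in>R. ti - DL < r \<and> r \<le> t - D}"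
  have "finite ?H"
    by (rule finite_subset[OF _ finite_releases_le[OF assms(1,2), of "t - D"]]) auto
  then have "demand D DL ti t R (max_behaviour CL CH DL ti) =
               sum (max_behaviour CL CH DL ti) ?L + sum (max_behaviour CL CH DL ti) ?H"
    unfolding demand_def jobs_due_eq[OF assms(3)]
    using finite_releases_le[OF assms(1,2)] by (intro sum.union_disjoint) auto
  also have "\<dots> = sum (\<lambda>_. CL) ?L + sum (\<lambda>_. CH) ?H"
    unfolding max_behaviour_def lc_job_def by (intro arg_cong2[where f = "(+)"] sum.cong) auto
  finally show ?thesis by simp
qed

lemma releases_in_short_window:
  assumes "legal_release T R" "b < a + T"
  obtains "{r\<in>R. a < r \<and> r \<le> b} = {}"
    | r where "r \<in> R" "a < r" "r \<le> b" "{r\<in>R. a < r \<and> r \<le> b} = {r}"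
proof (cases "{r\<in>R. a < r \<and> r \<le> b} = {}")
  case False
  then obtain r where r: "r \<in> R" "a < r" "r \<le> b" by auto
  moreover have "{r\<in>R. a < r \<and> r \<le> b} = {r}"
    using r assms legal_release_eq_if_dist_less[OF assms(1) r(1)] by force
  ultimately show thesis by (rule that(2))
qed (rule that(1))

definition first_release_through :: "real \<Rightarrow> real \<Rightarrow> real" where
  "first_release_through T b = b - real_of_int \<lfloor>b / T\<rfloor> * T"

lemma first_release_through_nonneg:
  assumes "0 < T"
  shows "0 \<le> first_release_through T b"
proof -
  have "real_of_int \<lfloor>b / T\<rfloor> * T \<le> b / T * T" using assms by (intro mult_right_mono) auto
  then show ?thesis using assms unfolding first_release_through_def by simp
qed

lemma mem_periodic_from_first_release_through:
  assumes "0 < T" "0 \<le> b"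
  shows "b \<in> periodic_from T (first_release_through T b)"
  unfolding periodic_from_def first_release_through_def
  using assms by (intro CollectI exI[of _ "nat \<lfloor>b / T\<rfloor>"]) simp

lemma card_periodic_from_first_release_through_le:
  assumes "0 < T"
  shows "card {r\<in>periodic_from T (first_release_through T b). r \<le> b - T} = nat \<lfloor>b / T\<rfloor>"
proof -
  have "(b - T - first_release_through T b) / T = real_of_int (\<lfloor>b / T\<rfloor> - 1)"
    using assms unfolding first_release_through_def by (simp add: field_simps)
  then show ?thesis unfolding card_periodic_from_le[OF assms] by simp
qed

lemma demand_le_periodic_from:
  assumes "0 < T" "0 \<le> CL" "CL \<le> CH" "ti \<le> t" "t - D < ti - DL + T"
    and "legal_release T R" "legal_behaviour CL CH DL ti R c"
  shows "demand D DL ti t R c \<le> demand D DL ti t (periodic_from T 0) (max_behaviour CL CH DL ti)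
       \<or> demand D DL ti t R c \<le>
           demand D DL ti t (periodic_from T (first_release_through T (t - D))) (max_behaviour CL CH DL ti)"
proof -
  define a b where "a = ti - DL" and "b = t - D"
  let ?demand = "\<lambda>R. demand D DL ti t R (max_behaviour CL CH DL ti)"
  let ?L = "\<lambda>R. card {r\<in>R. r \<le> a}" and ?H = "\<lambda>R. card {r\<in>R. a < r \<and> r \<le> b}"
  have demand_eq: "?demand R' = CL * ?L R' + CH * ?H R'" if "legal_release T R'" for R'
    unfolding a_def b_def using demand_max_behaviour[OF assms(1) that assms(4)] .
  have bound: "demand D DL ti t R c \<le> CL * ?L R + CH * ?H R"
    using demand_le_demand_max_behaviour[OF assms(7), of D t] demand_eq[OF assms(6)] by simp
  have window: "b < a + T" using assms(5) unfolding a_def b_def by simp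
  from releases_in_short_window[OF assms(6) window] show ?thesis
  proof cases
    case 1
    have "?L R \<le> ?L (periodic_from T 0)"
      using card_releases_le[OF assms(1,6)] card_periodic_from_le[OF assms(1)] by simp
    moreover have "?H R = 0" unfolding 1 by simp
    ultimately have "CL * ?L R + CH * ?H R \<le> CL * ?L (periodic_from T 0) + CH * ?H (periodic_from T 0)"
      using assms(2,3) by (intro add_mono mult_left_mono) auto
    then show ?thesis
      using bound demand_eq[OF legal_release_periodic_from[OF assms(1) order_refl]] by simp
  next
    case (2 r)
    define P where "P = periodic_from T (first_release_through T b)"
    have "{r'\<in>R. r' \<le> a} \<subseteq> {r'\<in>R. r' \<le> b - T}"
      using 2 legal_release_eq_if_dist_less[OF assms(6) 2(1)] by force
    then have "?L R \<le> card {r'\<in>R. r' \<le> b - T}"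
      by (intro card_mono finite_releases_le[OF assms(1,6)])
    also have "\<dots> \<le> nat (\<lfloor>(b - T) / T\<rfloor> + 1)"
      by (rule card_releases_le[OF assms(1,6)])
    also have "\<dots> = card {r\<in>P. r \<le> b - T}"
      unfolding P_def card_periodic_from_first_release_through_le[OF assms(1)]
      using assms(1) by (simp add: diff_divide_distrib)
    also have "\<dots> \<le> ?L P"
      using window by (intro card_mono) (auto simp: P_def finite_periodic_from_le[OF assms(1)])
    finally have L: "?L R \<le> ?L P" .
    have "0 \<le> b" using 2 assms(6) unfolding legal_release_def by force
    then have "b \<in> {r\<in>P. a < r \<and> r \<le> b}"
      using 2 mem_periodic_from_first_release_through[OF assms(1)] unfolding P_def by auto
    moreover have "finite {r\<in>P. a < r \<and> r \<le> b}"
      by (rule finite_subset[OF _ finite_periodic_from_le[OF assms(1)]]) (auto simp: P_def)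
    ultimately have "?H R \<le> ?H P"
      using 2(4) by (auto simp: Suc_le_eq card_gt_0_iff)
    with L have "CL * ?L R + CH * ?H R \<le> CL * ?L P + CH * ?H P"
      using assms(2,3) by (intro add_mono mult_left_mono) auto
    then show ?thesis
      using bound demand_eq[OF legal_release_periodic_from[OF assms(1) first_release_through_nonneg[OF assms(1)]]]
      unfolding P_def b_def by simp
  qed
qed

theorem lemma4:
  fixes T CL CH D DL ti t :: real
  assumes "0 < T" and "0 < DL" and "DL \<le> D" and "D \<le> T"
    and "0 \<le> CL" and "CL < CH"
    and "0 \<le> ti" and "ti \<le> t"
    and "D - DL \<le> t - ti" and "t - ti < D"
  shows "\<exists>s \<in> {0, t - D - real_of_int \<lfloor>(t - D) / T\<rfloor> * T}.
           \<exists>c. legal_release T (periodic_from T s) \<and>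
               legal_behaviour CL CH DL ti (periodic_from T s) c \<and>
               (\<forall>R c'. legal_release T R \<longrightarrow> legal_behaviour CL CH DL ti R c' \<longrightarrow>
                  demand D DL ti t R c' \<le> demand D DL ti t (periodic_from T s) c)"
proof -
  define s where "s = first_release_through T (t - D)"
  let ?demand = "\<lambda>s. demand D DL ti t (periodic_from T s) (max_behaviour CL CH DL ti)"
  have dominated: "demand D DL ti t R c' \<le> max (?demand 0) (?demand s)"
    if "legal_release T R" "legal_behaviour CL CH DL ti R c'" for R c'
  proof -
    have "t - D < ti - DL + T" using assms(3,4,10) by simp
    from demand_le_periodic_from[OF assms(1,5) _ assms(8) this that] assms(6)
    show ?thesis unfolding s_def by linarith
  qed
  obtain s' where s': "s' \<in> {0, s}" "?demand s' = max (?demand 0) (?demand s)"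
    by (metis insertCI max_def)
  then have "0 \<le> s'" using first_release_through_nonneg[OF assms(1)] unfolding s_def by auto
  then show ?thesis
    using s' legal_release_periodic_from[OF assms(1)] legal_behaviour_max_behaviour assms(5,6) dominated
    unfolding s_def first_release_through_def by (intro bexI[of _ s'] exI[of _ "max_behaviour CL CH DL ti"]) auto
qed

end
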